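(* Consider problem $\mathbf{P4}$ (defined in the context) with $E_{max}>0$. Let $A_1=\sum_{i=1}^M\gamma_i$, $A_2=\sum_{j=1}^N\theta_j$, $a=\sum_{i=1}^M\eta_iP_Bh_{1,i}$, $f(x)=x\ln x-x+1$, let $x^*>1$ solve $f(x^* )=A_1$ and, when $A_1\ge \frac{a}{N}A_2$, let $x_1^*>1$ solve $f(x_1^* )=A_1-\frac aNA_2$. Write $L=\frac{a(x_1^*-1)}{A_1+x_1^*-1}$, $U=\frac{N}{A_2}(x_1^*-1)$, $D=N(x_1^*-1+A_1)-aA_2$. Then an optimal solution of $\mathbf{P4}$ is, for $i=1,\dots,M$, $j=1,\dots,N$: (i) if $A_1\ge\frac aNA_2$ and $E_{max}\le L$: $\tau_0^*=\min\left[\frac{x^*-1}{A_1+x^*-1},\frac{E_{max}}{a}\right]$, $\tau_{1,i}^*=\max\left[\frac{\gamma_i}{A_1+x^*-1},\frac{\gamma_i}{A_1}\left(1-\frac{E_{max}}{a}\right)\right]$, $\tau_{2,j}^*=0$, $\bar E^*=0$; (ii) if $A_1\ge\frac aNA_2$ and $L\le E_{max}\le U$: $\tau_0^*=\frac{N(x_1^*-1)-E_{max}A_2}{D}$, $\tau_{1,i}^*=\frac{\gamma_i\left(N(x_1^*-1)-E_{max}A_2\right)}{(x_1^*-1)D}$, $\tau_{2,j}^*=\frac{\theta_j\left(E_{max}(x_1^*-1+A_1)-a(x_1^*-1)\right)}{(x_1^*-1)D}$, $\bar E^*=\frac{E_{max}(x_1^*-1+A_1)-a(x_1^*-1)}{D}$;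 (iii) if ($A_1\ge\frac aNA_2$ and $E_{max}\ge U$) or $A_1<\frac aNA_2$: $\tau_0^*=0$, $\tau_{1,i}^*=0$, $\tau_{2,j}^*=\theta_j/A_2$, $\bar E^*=E_{max}/N$.
   Context: Integers $M,N\ge 1$; positive constants $P_B$, $\Gamma$, $\sigma^2$, $E_{max}$; for $i=1,\dots,M$ constants $\eta_i\in(0,1)$, $h_{1,i}>0$, $g_{1,i}>0$; for $j=1,\dots,N$ constants $g_{2,j}>0$. Define $\gamma_i=\eta_ih_{1,i}g_{1,i}P_B/(\Gamma\sigma^2)$ and $\theta_j=g_{2,j}/(\Gamma\sigma^2)$. For $\tau>0$ let $R_{1,i}(\tau_0,\tau)=\tau\log_2(1+\gamma_i\tau_0/\tau)$ and $R_{2,j}(\bar E,\tau)=\tau\log_2(1+\theta_j\bar E/\tau)$, with both set to $0$ when $\tau=0$. Problem $\mathbf{P4}$: maximize $\sum_{i=1}^MR_{1,i}(\tau_0,\tau_{1,i})+\sum_{j=1}^NR_{2,j}(\bar E,\tau_{2,j})$ over $\tau_0,\tau_{1,1},\dots,\tau_{1,M},\tau_{2,1},\dots,\tau_{2,N}\ge0$ and $\bar E\ge 0$, subject to $\tau_0+\sum_{i=1}^M\tau_{1,i}+\sum_{j=1}^N\tau_{2,j}\le 1$ and $a\tau_0+N\bar E\le E_{max}$, where $a=\sum_{i=1}^M\eta_iP_Bh_{1,i}$. *)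

theory Defs
  imports Complex_Main
begin

definition rate :: "real \<Rightarrow> real \<Rightarrow> real \<Rightarrow> real" where
  "rate c e t = (if t = 0 then 0 else t * log 2 (1 + c * e / t))"

definition P4_obj ::
  "nat \<Rightarrow> nat \<Rightarrow> (nat \<Rightarrow> real) \<Rightarrow> (nat \<Rightarrow> real) \<Rightarrow>
   real \<Rightarrow> (nat \<Rightarrow> real) \<Rightarrow> (nat \<Rightarrow> real) \<Rightarrow> real \<Rightarrow> real" where
  "P4_obj M N gamma theta t0 t1 t2 E =
     (\<Sum>i=1..M. rate (gamma i) t0 (t1 i)) + (\<Sum>j=1..N. rate (theta j) E (t2 j))"

definition P4_feasible ::
  "nat \<Rightarrow> nat \<Rightarrow> real \<Rightarrow> real \<Rightarrow>
   real \<Rightarrow> (nat \<Rightarrow> real) \<Rightarrow> (nat \<Rightarrow> real) \<Rightarrow> real \<Rightarrow> bool" where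
  "P4_feasible M N a Emax t0 t1 t2 E \<longleftrightarrow>
     t0 \<ge> 0 \<and> (\<forall>i\<in>{1..M}. t1 i \<ge> 0) \<and> (\<forall>j\<in>{1..N}. t2 j \<ge> 0) \<and> E \<ge> 0 \<and>
     t0 + (\<Sum>i=1..M. t1 i) + (\<Sum>j=1..N. t2 j) \<le> 1 \<and>
     a * t0 + real N * E \<le> Emax"

definition P4_optimal ::
  "nat \<Rightarrow> nat \<Rightarrow> (nat \<Rightarrow> real) \<Rightarrow> (nat \<Rightarrow> real) \<Rightarrow> real \<Rightarrow> real \<Rightarrow>
   real \<Rightarrow> (nat \<Rightarrow> real) \<Rightarrow> (nat \<Rightarrow> real) \<Rightarrow> real \<Rightarrow> bool" where
  "P4_optimal M N gamma theta a Emax t0 t1 t2 E \<longleftrightarrow>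
     P4_feasible M N a Emax t0 t1 t2 E \<and>
     (\<forall>s0 s1 s2 F. P4_feasible M N a Emax s0 s1 s2 F \<longrightarrow>
        P4_obj M N gamma theta s0 s1 s2 F \<le> P4_obj M N gamma theta t0 t1 t2 E)"

definition fP4 :: "real \<Rightarrow> real" where
  "fP4 x = x * ln x - x + 1"

end

theory Submission
  imports Defs
begin

text \<open>
  Every rate term lies below a tangent of the concave perspective function
  t \<mapsto> t log2 (1 + c e / t): for any x > 0, ln z \<le> ln x + (z - x) / x gives
  rate c e t \<le> (t fP4 x + c e) / (x ln 2), with equality iff c e = (x - 1) t.
  Summing these bounds and pricing time at fP4 x and energy at \<nu> yields, whenever
  \<Sum>\<gamma> \<le> fP4 x + a \<nu> and \<Sum>\<theta> \<le> N \<nu>, the upper bound (fP4 x + \<nu> Emax) / (x ln 2)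
  on the objective of every feasible point. In each of the three cases the proposed
  point is feasible and attains this bound for a suitable choice of x and \<nu>.
\<close>

lemma fP4_nonneg:
  assumes "x > 0"
  shows "fP4 x \<ge> 0"
proof -
  have "x * (ln 1 - ln x) \<le> x * ((1 - x) / x)"
    using ln_diff_le[of 1 x] assms by (intro mult_left_mono) auto
  also have "\<dots> = 1 - x" using assms by simp
  finally show ?thesis by (simp add: fP4_def algebra_simps)
qed

lemma fP4_mono:
  assumes "1 \<le> y" "y \<le> z"
  shows "fP4 y \<le> fP4 z"
proof -
  have "z * (ln y - ln z) \<le> z * ((y - z) / z)"
    using ln_diff_le[of y z] assms by (intro mult_left_mono) auto
  also have "\<dots> = y - z" using assms by simp
  finally have "z * ln y \<le> z * ln z + y - z" by (simp add: algebra_simps)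
  moreover have "y * ln y \<le> z * ln y" using assms by (intro mult_right_mono) auto
  ultimately show ?thesis by (simp add: fP4_def)
qed

lemma rate_le_tangent:
  assumes "c \<ge> 0" "e \<ge> 0" "t \<ge> 0" "x > 0"
  shows "rate c e t \<le> (t * fP4 x + c * e) / (x * ln 2)"
proof (cases "t = 0")
  case True
  with assms show ?thesis by (simp add: rate_def)
next
  case False
  with assms have t: "t > 0" by simp
  have "ln (1 + c * e / t) - ln x \<le> (1 + c * e / t - x) / x"
    using t assms by (intro ln_diff_le) (auto intro: add_pos_nonneg)
  hence "t * ln (1 + c * e / t) \<le> t * (ln x + (1 + c * e / t - x) / x)"
    using t by (intro mult_left_mono) auto
  also have "\<dots> = (t * fP4 x + c * e) / x" using t assms by (simp add: fP4_def field_simps)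
  finally have "t * ln (1 + c * e / t) / ln 2 \<le> (t * fP4 x + c * e) / x / ln 2"
    by (intro divide_right_mono) auto
  thus ?thesis using False by (simp add: rate_def log_def)
qed

lemma rate_eq_tangent:
  assumes "t \<ge> 0" "x > 0" "c * e = (x - 1) * t"
  shows "rate c e t = (t * fP4 x + c * e) / (x * ln 2)"
proof (cases "t = 0")
  case True
  with assms show ?thesis by (simp add: rate_def)
next
  case False
  with assms have "1 + c * e / t = x" by (simp add: field_simps)
  with False have "rate c e t = t * ln x / ln 2" by (simp add: rate_def log_def)
  also have "t * ln x = (t * fP4 x + c * e) / x" using assms by (simp add: fP4_def field_simps)
  finally show ?thesis by simp
qed

lemma sum_rate_le_tangent:
  assumes "\<And>i. i \<in> I \<Longrightarrow> c i \<ge> 0 \<and> s i \<ge> 0" "e \<ge> 0" "x > 0"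
  shows "(\<Sum>i\<in>I. rate (c i) e (s i)) \<le> (fP4 x * sum s I + sum c I * e) / (x * ln 2)"
proof -
  have "(\<Sum>i\<in>I. rate (c i) e (s i)) \<le> (\<Sum>i\<in>I. (s i * fP4 x + c i * e) / (x * ln 2))"
    using assms by (intro sum_mono rate_le_tangent) auto
  also have "\<dots> = (fP4 x * sum s I + sum c I * e) / (x * ln 2)"
    by (simp add: sum_divide_distrib[symmetric] sum.distrib sum_distrib_left sum_distrib_right
        mult.commute)
  finally show ?thesis .
qed

lemma sum_rate_eq_tangent:
  assumes "\<And>i. i \<in> I \<Longrightarrow> s i \<ge> 0 \<and> c i * e = (x - 1) * s i" "x > 0"
  shows "(\<Sum>i\<in>I. rate (c i) e (s i)) = (fP4 x * sum s I + sum c I * e) / (x * ln 2)"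
proof -
  have "(\<Sum>i\<in>I. rate (c i) e (s i)) = (\<Sum>i\<in>I. (s i * fP4 x + c i * e) / (x * ln 2))"
    using assms by (intro sum.cong rate_eq_tangent) auto
  also have "\<dots> = (fP4 x * sum s I + sum c I * e) / (x * ln 2)"
    by (simp add: sum_divide_distrib[symmetric] sum.distrib sum_distrib_left sum_distrib_right
        mult.commute)
  finally show ?thesis .
qed

lemma P4_obj_le_dual_bound:
  assumes "\<And>i. i \<in> {1..M} \<Longrightarrow> gamma i \<ge> 0" "\<And>j. j \<in> {1..N} \<Longrightarrow> theta j \<ge> 0"
    and "x > 0" "nu \<ge> 0"
    and dual_time: "(\<Sum>i=1..M. gamma i) \<le> fP4 x + a * nu"
    and dual_energy: "(\<Sum>j=1..N. theta j) \<le> real N * nu"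
    and "P4_feasible M N a Emax t0 t1 t2 E"
  shows "P4_obj M N gamma theta t0 t1 t2 E \<le> (fP4 x + nu * Emax) / (x * ln 2)"
proof -
  let ?A1 = "\<Sum>i=1..M. gamma i" and ?A2 = "\<Sum>j=1..N. theta j"
  let ?T1 = "\<Sum>i=1..M. t1 i" and ?T2 = "\<Sum>j=1..N. t2 j"
  have nonneg: "t0 \<ge> 0" "E \<ge> 0" and time: "t0 + ?T1 + ?T2 \<le> 1"
    and energy: "a * t0 + real N * E \<le> Emax"
    using assms(7) by (auto simp: P4_feasible_def)
  have "P4_obj M N gamma theta t0 t1 t2 E
      \<le> (fP4 x * ?T1 + ?A1 * t0) / (x * ln 2) + (fP4 x * ?T2 + ?A2 * E) / (x * ln 2)"
    unfolding P4_obj_def using assms by (intro add_mono sum_rate_le_tangent) (auto simp: P4_feasible_def)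
  also have "\<dots> \<le> (fP4 x + nu * Emax) / (x * ln 2)"
    unfolding add_divide_distrib[symmetric]
  proof (rule divide_right_mono)
    have "?A1 * t0 \<le> (fP4 x + a * nu) * t0" using dual_time nonneg(1) by (rule mult_right_mono)
    moreover have "?A2 * E \<le> real N * nu * E" using dual_energy nonneg(2) by (rule mult_right_mono)
    moreover have "fP4 x * (t0 + ?T1 + ?T2) \<le> fP4 x"
      using mult_left_mono[OF time fP4_nonneg[OF \<open>x > 0\<close>]] by simp
    moreover have "nu * (a * t0 + real N * E) \<le> nu * Emax"
      using energy \<open>nu \<ge> 0\<close> by (rule mult_left_mono)
    ultimately show "fP4 x * ?T1 + ?A1 * t0 + (fP4 x * ?T2 + ?A2 * E) \<le> fP4 x + nu * Emax"
      by (simp add: algebra_simps)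
  qed (use \<open>x > 0\<close> in simp)
  finally show ?thesis .
qed

lemma P4_obj_eq_dual_bound:
  assumes "P4_feasible M N a Emax t0 t1 t2 E" "x > 0"
    and slack_time: "(fP4 x + a * nu - (\<Sum>i=1..M. gamma i)) * t0 = 0"
    and slack_energy: "(real N * nu - (\<Sum>j=1..N. theta j)) * E = 0"
    and time: "t0 + (\<Sum>i=1..M. t1 i) + (\<Sum>j=1..N. t2 j) = 1"
    and energy: "a * t0 + real N * E = Emax"
    and "\<And>i. i \<in> {1..M} \<Longrightarrow> gamma i * t0 = (x - 1) * t1 i"
    and "\<And>j. j \<in> {1..N} \<Longrightarrow> theta j * E = (x - 1) * t2 j"
  shows "P4_obj M N gamma theta t0 t1 t2 E = (fP4 x + nu * Emax) / (x * ln 2)"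
proof -
  let ?A1 = "\<Sum>i=1..M. gamma i" and ?A2 = "\<Sum>j=1..N. theta j"
  let ?T1 = "\<Sum>i=1..M. t1 i" and ?T2 = "\<Sum>j=1..N. t2 j"
  have obj: "P4_obj M N gamma theta t0 t1 t2 E
      = (fP4 x * ?T1 + ?A1 * t0) / (x * ln 2) + (fP4 x * ?T2 + ?A2 * E) / (x * ln 2)"
    unfolding P4_obj_def using assms
    by (intro arg_cong2[where f = "(+)"] sum_rate_eq_tangent) (auto simp: P4_feasible_def)
  have "?A1 * t0 = (fP4 x + a * nu) * t0" using slack_time by algebra
  moreover have "?A2 * E = real N * nu * E" using slack_energy by algebra
  ultimately have "fP4 x * ?T1 + ?A1 * t0 + (fP4 x * ?T2 + ?A2 * E)
      = fP4 x * (t0 + ?T1 + ?T2) + nu * (a * t0 + real N * E)"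
    by (simp add: algebra_simps)
  with obj time energy show ?thesis by (simp add: add_divide_distrib[symmetric])
qed

lemma P4_optimal_by_KKT:
  assumes "\<And>i. i \<in> {1..M} \<Longrightarrow> gamma i \<ge> 0" "\<And>j. j \<in> {1..N} \<Longrightarrow> theta j \<ge> 0"
    and "x > 0" "nu \<ge> 0"
    and "(\<Sum>i=1..M. gamma i) \<le> fP4 x + a * nu" "(\<Sum>j=1..N. theta j) \<le> real N * nu"
    and "P4_feasible M N a Emax t0 t1 t2 E"
    and "(fP4 x + a * nu - (\<Sum>i=1..M. gamma i)) * t0 = 0"
    and "(real N * nu - (\<Sum>j=1..N. theta j)) * E = 0"
    and "t0 + (\<Sum>i=1..M. t1 i) + (\<Sum>j=1..N. t2 j) = 1"
    and "a * t0 + real N * E = Emax"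
    and "\<And>i. i \<in> {1..M} \<Longrightarrow> gamma i * t0 = (x - 1) * t1 i"
    and "\<And>j. j \<in> {1..N} \<Longrightarrow> theta j * E = (x - 1) * t2 j"
  shows "P4_optimal M N gamma theta a Emax t0 t1 t2 E"
  unfolding P4_optimal_def
  using assms P4_obj_eq_dual_bound[OF assms(7,3,8-13)] P4_obj_le_dual_bound[OF assms(1-6)]
  by auto

lemma P4_optimal_cong:
  assumes "\<And>i. i \<in> {1..M} \<Longrightarrow> t1 i = t1' i"
  shows "P4_optimal M N gamma theta a Emax t0 t1 t2 E = P4_optimal M N gamma theta a Emax t0 t1' t2 E"
proof -
  have "(\<Sum>i=1..M. t1 i) = (\<Sum>i=1..M. t1' i)"
    and "(\<Sum>i=1..M. rate (gamma i) t0 (t1 i)) = (\<Sum>i=1..M. rate (gamma i) t0 (t1' i))"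
    using assms by (auto intro: sum.cong)
  with assms show ?thesis unfolding P4_optimal_def P4_feasible_def P4_obj_def by auto
qed

locale P4_instance =
  fixes M N :: nat and gamma theta :: "nat \<Rightarrow> real" and a Emax A1 A2 :: real
  assumes M_pos: "M \<ge> 1" and N_pos: "N \<ge> 1"
    and gamma_pos: "\<And>i. i \<in> {1..M} \<Longrightarrow> gamma i > 0"
    and theta_pos: "\<And>j. j \<in> {1..N} \<Longrightarrow> theta j > 0"
    and a_pos: "a > 0" and Emax_pos: "Emax > 0"
    and sum_gamma: "(\<Sum>i=1..M. gamma i) = A1"
    and sum_theta: "(\<Sum>j=1..N. theta j) = A2"
begin

lemma A1_pos: "A1 > 0"
  unfolding sum_gamma[symmetric] using M_pos gamma_pos by (intro sum_pos) auto

lemma A2_pos: "A2 > 0"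
  unfolding sum_theta[symmetric] using N_pos theta_pos by (intro sum_pos) auto

lemma gamma_nonneg: "i \<in> {1..M} \<Longrightarrow> gamma i \<ge> 0"
  using gamma_pos less_imp_le by blast

lemma theta_nonneg: "j \<in> {1..N} \<Longrightarrow> theta j \<ge> 0"
  using theta_pos less_imp_le by blast

lemma optimal_without_group2:
  assumes "x1 > 1" "fP4 x1 = A1 - a / real N * A2" "Emax \<le> a * (x1 - 1) / (A1 + x1 - 1)"
  shows "P4_optimal M N gamma theta a Emax (Emax / a) (\<lambda>i. gamma i / A1 * (1 - Emax / a)) (\<lambda>j. 0) 0"
proof -
  define t0 where "t0 = Emax / a"
  have "t0 > 0" using Emax_pos a_pos by (simp add: t0_def)
  have t0_x1: "t0 * (A1 + x1 - 1) \<le> x1 - 1"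
    using assms(1,3) A1_pos a_pos by (simp add: t0_def field_simps)
  hence "t0 < 1" using A1_pos assms(1) by (smt (verit) mult_le_cancel_right1)
  text \<open>The energy budget binds, so the tangent point is not xs but the y with
    gamma i * t0 = (y - 1) * t1 i; the energy price \<nu> makes up the difference.\<close>
  define y where "y = 1 + A1 * t0 / (1 - t0)"
  have "y > 1" using A1_pos \<open>t0 > 0\<close> \<open>t0 < 1\<close> by (simp add: y_def)
  have "A1 * t0 \<le> (x1 - 1) * (1 - t0)" using t0_x1 by (simp add: algebra_simps)
  hence "y \<le> x1" using \<open>t0 < 1\<close> by (simp add: y_def field_simps)
  hence fy: "a / real N * A2 \<le> A1 - fP4 y" using fP4_mono[of y x1] \<open>y > 1\<close> assms(2) by simp
  show ?thesis unfolding t0_def[symmetric]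
  proof (rule P4_optimal_by_KKT[where x = y and nu = "(A1 - fP4 y) / a"], unfold sum_gamma sum_theta)
    have "(\<Sum>i=1..M. gamma i / A1 * (1 - t0)) = (\<Sum>i=1..M. gamma i) / A1 * (1 - t0)"
      by (simp add: sum_distrib_right sum_divide_distrib)
    also have "\<dots> = 1 - t0" unfolding sum_gamma using A1_pos by simp
    finally have "(\<Sum>i=1..M. gamma i / A1 * (1 - t0)) = 1 - t0" .
    thus "t0 + (\<Sum>i=1..M. gamma i / A1 * (1 - t0)) + (\<Sum>j=1..N. 0) = 1" by simp
    thus "P4_feasible M N a Emax t0 (\<lambda>i. gamma i / A1 * (1 - t0)) (\<lambda>j. 0) 0"
      using \<open>t0 > 0\<close> \<open>t0 < 1\<close> gamma_pos A1_pos a_pos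
      by (auto simp: P4_feasible_def t0_def less_imp_le)
    have "0 < a / real N * A2" using a_pos N_pos A2_pos by simp
    thus "0 \<le> (A1 - fP4 y) / a" using fy a_pos by simp
    show "A2 \<le> real N * ((A1 - fP4 y) / a)"
      using fy N_pos a_pos by (simp add: field_simps)
    show "\<And>i. i \<in> {1..M} \<Longrightarrow> gamma i * t0 = (y - 1) * (gamma i / A1 * (1 - t0))"
      using A1_pos \<open>t0 < 1\<close> by (simp add: y_def field_simps)
  qed (use a_pos gamma_nonneg theta_nonneg \<open>y > 1\<close> in \<open>auto simp: t0_def\<close>)
qed

lemma optimal_without_group2_min_max:
  assumes "xs > 1" "fP4 xs = A1"
    and "x1 > 1" "fP4 x1 = A1 - a / real N * A2" "Emax \<le> a * (x1 - 1) / (A1 + x1 - 1)"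
  shows "P4_optimal M N gamma theta a Emax
           (min ((xs - 1) / (A1 + xs - 1)) (Emax / a))
           (\<lambda>i. max (gamma i / (A1 + xs - 1)) (gamma i / A1 * (1 - Emax / a)))
           (\<lambda>j. 0) 0"
proof -
  have "x1 < xs"
  proof (rule ccontr)
    assume "\<not> x1 < xs"
    hence "fP4 xs \<le> fP4 x1" using assms(1) by (intro fP4_mono) auto
    moreover have "0 < a / real N * A2" using a_pos N_pos A2_pos by simp
    ultimately show False using assms(2,4) by simp
  qed
  have "Emax / a \<le> (x1 - 1) / (A1 + x1 - 1)"
    using assms(3,5) A1_pos a_pos by (simp add: field_simps)
  also have "\<dots> \<le> (xs - 1) / (A1 + xs - 1)"
    using \<open>x1 < xs\<close> assms(3) A1_pos by (simp add: divide_simps algebra_simps)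
  finally have t0: "Emax / a \<le> (xs - 1) / (A1 + xs - 1)" .
  have "max (gamma i / (A1 + xs - 1)) (gamma i / A1 * (1 - Emax / a)) = gamma i / A1 * (1 - Emax / a)"
    if "i \<in> {1..M}" for i
  proof -
    have "gamma i / (A1 + xs - 1) = gamma i / A1 * (1 - (xs - 1) / (A1 + xs - 1))"
      using A1_pos assms(1) by (simp add: field_simps)
    also have "\<dots> \<le> gamma i / A1 * (1 - Emax / a)"
      using t0 gamma_nonneg[OF that] A1_pos by (intro mult_left_mono) auto
    finally show ?thesis by simp
  qed
  hence "P4_optimal M N gamma theta a Emax (Emax / a)
           (\<lambda>i. max (gamma i / (A1 + xs - 1)) (gamma i / A1 * (1 - Emax / a))) (\<lambda>j. 0) 0
       = P4_optimal M N gamma theta a Emax (Emax / a)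
           (\<lambda>i. gamma i / A1 * (1 - Emax / a)) (\<lambda>j. 0) 0"
    by (intro P4_optimal_cong) simp
  with t0 optimal_without_group2[OF assms(3-5)] show ?thesis by simp
qed

lemma optimal_both_groups:
  assumes "x1 > 1" "fP4 x1 = A1 - a / real N * A2"
    and "a * (x1 - 1) / (A1 + x1 - 1) \<le> Emax" "Emax \<le> real N / A2 * (x1 - 1)"
    and D: "D = real N * (x1 - 1 + A1) - a * A2"
  shows "P4_optimal M N gamma theta a Emax
           ((real N * (x1 - 1) - Emax * A2) / D)
           (\<lambda>i. gamma i * (real N * (x1 - 1) - Emax * A2) / ((x1 - 1) * D))
           (\<lambda>j. theta j * (Emax * (x1 - 1 + A1) - a * (x1 - 1)) / ((x1 - 1) * D))
           ((Emax * (x1 - 1 + A1) - a * (x1 - 1)) / D)"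
proof -
  define P where "P = real N * (x1 - 1) - Emax * A2"
  define Q where "Q = Emax * (x1 - 1 + A1) - a * (x1 - 1)"
  have "a / real N * A2 \<le> A1" using assms(2) fP4_nonneg[of x1] assms(1) by simp
  hence "a * A2 \<le> real N * A1" using N_pos by (simp add: field_simps)
  moreover have "real N * (x1 - 1) > 0" using assms(1) N_pos by simp
  ultimately have "D > 0" by (simp add: D algebra_simps)
  have "P \<ge> 0" using assms(4) A2_pos by (simp add: P_def field_simps)
  have "Q \<ge> 0" using assms(1,3) A1_pos by (simp add: Q_def field_simps)
  have sum1: "(\<Sum>i=1..M. gamma i * P / ((x1 - 1) * D)) = A1 * P / ((x1 - 1) * D)"
    unfolding sum_gamma[symmetric] by (simp add: sum_divide_distrib sum_distrib_right)
  have sum2: "(\<Sum>j=1..N. theta j * Q / ((x1 - 1) * D)) = A2 * Q / ((x1 - 1) * D)"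
    unfolding sum_theta[symmetric] by (simp add: sum_divide_distrib sum_distrib_right)
  have time: "P / D + A1 * P / ((x1 - 1) * D) + A2 * Q / ((x1 - 1) * D) = 1"
  proof -
    have "P / D = P * (x1 - 1) / ((x1 - 1) * D)" using assms(1) by simp
    hence "P / D + A1 * P / ((x1 - 1) * D) + A2 * Q / ((x1 - 1) * D)
        = (P * (x1 - 1) + A1 * P + A2 * Q) / ((x1 - 1) * D)"
      by (simp add: add_divide_distrib)
    also have "P * (x1 - 1) + A1 * P + A2 * Q = (x1 - 1) * D"
      by (simp add: P_def Q_def D algebra_simps)
    finally show ?thesis using assms(1) \<open>D > 0\<close> by simp
  qed
  have energy: "a * (P / D) + real N * (Q / D) = Emax"
  proof -
    have "a * P + real N * Q = Emax * D" by (simp add: P_def Q_def D algebra_simps)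
    thus ?thesis using \<open>D > 0\<close> by (simp add: field_simps)
  qed
  show ?thesis unfolding P_def[symmetric] Q_def[symmetric]
  proof (rule P4_optimal_by_KKT[where x = x1 and nu = "A2 / real N"], unfold sum_gamma sum_theta)
    show "P4_feasible M N a Emax (P / D) (\<lambda>i. gamma i * P / ((x1 - 1) * D))
        (\<lambda>j. theta j * Q / ((x1 - 1) * D)) (Q / D)"
      unfolding P4_feasible_def using \<open>P \<ge> 0\<close> \<open>Q \<ge> 0\<close> \<open>D > 0\<close> assms(1)
        gamma_nonneg theta_nonneg sum1 sum2 time energy
      by auto
  qed (use assms(1,2) N_pos gamma_nonneg theta_nonneg A2_pos sum1 sum2 time energy in auto)
qed

lemma optimal_group2_only:
  assumes "A1 \<le> fP4 (1 + A2 * Emax / real N) + a / real N * A2"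
  shows "P4_optimal M N gamma theta a Emax 0 (\<lambda>i. 0) (\<lambda>j. theta j / A2) (Emax / real N)"
proof (rule P4_optimal_by_KKT[where x = "1 + A2 * Emax / real N" and nu = "A2 / real N"],
    unfold sum_gamma sum_theta)
  have "(\<Sum>j=1..N. theta j / A2) = 1"
    unfolding sum_divide_distrib[symmetric] sum_theta using A2_pos by simp
  thus "0 + (\<Sum>i=1..M. 0) + (\<Sum>j=1..N. theta j / A2) = 1" by simp
  thus "P4_feasible M N a Emax 0 (\<lambda>i. 0) (\<lambda>j. theta j / A2) (Emax / real N)"
    unfolding P4_feasible_def using theta_nonneg A2_pos Emax_pos by auto
qed (use assms N_pos A2_pos Emax_pos gamma_nonneg theta_nonneg in \<open>auto intro: add_pos_nonneg\<close>)

end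

theorem theorem4:
  fixes M N :: nat
    and PB Gam sig2 Emax :: real
    and eta h1 g1 g2 :: "nat \<Rightarrow> real"
    and xs x1 :: real
  assumes "M \<ge> 1" and "N \<ge> 1"
    and "PB > 0" and "Gam > 0" and "sig2 > 0" and "Emax > 0"
    and "\<forall>i\<in>{1..M}. 0 < eta i \<and> eta i < 1 \<and> h1 i > 0 \<and> g1 i > 0"
    and "\<forall>j\<in>{1..N}. g2 j > 0"
  defines "gamma \<equiv> (\<lambda>i. eta i * h1 i * g1 i * PB / (Gam * sig2))"
    and "theta \<equiv> (\<lambda>j. g2 j / (Gam * sig2))"
    and "a \<equiv> (\<Sum>i=1..M. eta i * PB * h1 i)"
  defines "A1 \<equiv> (\<Sum>i=1..M. gamma i)"
    and "A2 \<equiv> (\<Sum>j=1..N. theta j)"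
  defines "L \<equiv> a * (x1 - 1) / (A1 + x1 - 1)"
    and "U \<equiv> real N / A2 * (x1 - 1)"
    and "D \<equiv> real N * (x1 - 1 + A1) - a * A2"
  assumes xs: "xs > 1" "fP4 xs = A1"
  shows
    "(A1 \<ge> a / real N * A2 \<and> x1 > 1 \<and> fP4 x1 = A1 - a / real N * A2 \<and> Emax \<le> L \<longrightarrow>
       P4_optimal M N gamma theta a Emax
         (min ((xs - 1) / (A1 + xs - 1)) (Emax / a))
         (\<lambda>i. max (gamma i / (A1 + xs - 1)) (gamma i / A1 * (1 - Emax / a)))
         (\<lambda>j. 0) 0)
   \<and> (A1 \<ge> a / real N * A2 \<and> x1 > 1 \<and> fP4 x1 = A1 - a / real N * A2 \<and>
        L \<le> Emax \<and> Emax \<le> U \<longrightarrow>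
       P4_optimal M N gamma theta a Emax
         ((real N * (x1 - 1) - Emax * A2) / D)
         (\<lambda>i. gamma i * (real N * (x1 - 1) - Emax * A2) / ((x1 - 1) * D))
         (\<lambda>j. theta j * (Emax * (x1 - 1 + A1) - a * (x1 - 1)) / ((x1 - 1) * D))
         ((Emax * (x1 - 1 + A1) - a * (x1 - 1)) / D))
   \<and> ((A1 \<ge> a / real N * A2 \<and> x1 > 1 \<and> fP4 x1 = A1 - a / real N * A2 \<and> Emax \<ge> U)
        \<or> A1 < a / real N * A2 \<longrightarrow>
       P4_optimal M N gamma theta a Emax 0 (\<lambda>i. 0) (\<lambda>j. theta j / A2) (Emax / real N))"
proof -
  interpret P4_instance M N gamma theta a Emax A1 A2
  proof
    show "a > 0" unfolding a_def using assms(1,3,7) by (intro sum_pos) auto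
  qed (use assms(1-8) in \<open>auto simp: gamma_def theta_def A1_def A2_def\<close>)
  have group2_condition: "A1 \<le> fP4 (1 + A2 * Emax / real N) + a / real N * A2"
    if "(A1 \<ge> a / real N * A2 \<and> x1 > 1 \<and> fP4 x1 = A1 - a / real N * A2 \<and> Emax \<ge> U)
        \<or> A1 < a / real N * A2"
    using that
  proof
    assume h: "A1 \<ge> a / real N * A2 \<and> x1 > 1 \<and> fP4 x1 = A1 - a / real N * A2 \<and> Emax \<ge> U"
    hence "x1 \<le> 1 + A2 * Emax / real N" using A2_pos N_pos by (simp add: U_def field_simps)
    hence "fP4 x1 \<le> fP4 (1 + A2 * Emax / real N)" using h by (intro fP4_mono) auto
    with h show ?thesis by simp
  next
    assume "A1 < a / real N * A2"
    moreover have "0 < 1 + A2 * Emax / real N" using A2_pos Emax_pos by (simp add: add_pos_nonneg)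
    ultimately show ?thesis using fP4_nonneg[of "1 + A2 * Emax / real N"] by simp
  qed
  show ?thesis
    using optimal_without_group2_min_max[OF xs] optimal_both_groups[OF _ _ _ _ D_def[THEN meta_eq_to_obj_eq]]
      optimal_group2_only[OF group2_condition]
    unfolding L_def U_def by blast
qed

end
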